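(* $rx_3(K_{2,t})=5$ for every $9\leq t\leq 20$, and $rx_3(K_{2,t})\geq 6$ for every $t\geq 21$.
   Context: An edge coloring of a graph $G$ is any assignment of colors to the edges (adjacent edges may receive the same color). A tree $T$ in an edge-colored graph is a rainbow tree if no two edges of $T$ have the same color. For $S\subseteq V(G)$, an $S$-tree is a subtree of $G$ containing all vertices of $S$. A $3$-rainbow coloring of $G$ is an edge coloring such that for every set $S$ of $3$ vertices of $G$ there is a rainbow $S$-tree in $G$. The $3$-rainbow index $rx_3(G)$ is the minimum number of colors in a $3$-rainbow coloring of $G$. $K_{2,t}$ denotes the complete bipartite graph with parts of sizes $2$ and $t$. *)

theory Defs
  imports Main
begin

definition graph :: "'a set \<Rightarrow> 'a set set \<Rightarrow> bool" where
  "graph V E \<longleftrightarrow> finite V \<and> (\<forall>e\<in>E. \<exists>u v. u \<noteq> v \<and> e = {u, v} \<and> u \<in> V \<and> v \<in> V)"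

fun walk :: "'a set set \<Rightarrow> 'a list \<Rightarrow> bool" where
  "walk ET [] = False"
| "walk ET [x] = True"
| "walk ET (x # y # xs) = ({x, y} \<in> ET \<and> walk ET (y # xs))"

definition connected_graph :: "'a set \<Rightarrow> 'a set set \<Rightarrow> bool" where
  "connected_graph VT ET \<longleftrightarrow>
     (\<forall>u\<in>VT. \<forall>v\<in>VT. \<exists>xs. walk ET xs \<and> set xs \<subseteq> VT \<and> hd xs = u \<and> last xs = v)"

definition has_cycle :: "'a set set \<Rightarrow> bool" where
  "has_cycle ET \<longleftrightarrow> (\<exists>xs. length xs \<ge> 3 \<and> distinct xs \<and> walk ET xs \<and> {last xs, hd xs} \<in> ET)"

definition is_tree :: "'a set \<Rightarrow> 'a set set \<Rightarrow> bool" where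
  "is_tree VT ET \<longleftrightarrow> VT \<noteq> {} \<and> (\<forall>e\<in>ET. e \<subseteq> VT) \<and> connected_graph VT ET \<and> \<not> has_cycle ET"

definition S_tree :: "'a set \<Rightarrow> 'a set set \<Rightarrow> 'a set \<Rightarrow> 'a set \<Rightarrow> 'a set set \<Rightarrow> bool" where
  "S_tree V E S VT ET \<longleftrightarrow> VT \<subseteq> V \<and> ET \<subseteq> E \<and> is_tree VT ET \<and> S \<subseteq> VT"

definition rainbow :: "('a set \<Rightarrow> nat) \<Rightarrow> 'a set set \<Rightarrow> bool" where
  "rainbow c ET \<longleftrightarrow> inj_on c ET"

definition three_rainbow_coloring :: "'a set \<Rightarrow> 'a set set \<Rightarrow> ('a set \<Rightarrow> nat) \<Rightarrow> bool" where
  "three_rainbow_coloring V E c \<longleftrightarrow>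
     (\<forall>S. S \<subseteq> V \<and> card S = 3 \<longrightarrow> (\<exists>VT ET. S_tree V E S VT ET \<and> rainbow c ET))"

definition rx3 :: "'a set \<Rightarrow> 'a set set \<Rightarrow> nat" where
  "rx3 V E = (LEAST k. \<exists>c. three_rainbow_coloring V E c \<and> card (c ` E) = k)"

definition K2_V :: "nat \<Rightarrow> (nat + nat) set" where
  "K2_V t = Inl ` {0, 1} \<union> Inr ` {0..<t}"

definition K2_E :: "nat \<Rightarrow> (nat + nat) set set" where
  "K2_E t = {{Inl i, Inr j} | i j. i < 2 \<and> j < t}"

end

theory Submission
  imports Defs
begin

(* Write the colouring of K_{2,t} as the pair of colours A j, B j of the two edges from the
   leaf Inr j to the centres Inl 0 and Inl 1. A tree through three leaves is either a star at
   a centre, or it contains both centres and hence a leaf k joined to both; this turns the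
   3-rainbow property into conditions on the colour pairs.
   With four colours no tree with five edges is rainbow, so every triple of leaves is joined
   inside itself, and a case analysis on the colour classes of A gives t <= 8. With five
   colours any three leaves have distinct representatives of their colour pairs, so each of
   the ten 2-sets of colours contains the colour pairs of at most two leaves: t <= 20.
   For 9 <= t <= 20 a prefix of a fixed list of 20 colour pairs, checked by evaluation,
   is a 3-rainbow colouring with five colours. *)

section \<open>Walks\<close>

lemma walk_nonempty: "walk ET xs \<Longrightarrow> xs \<noteq> []"
  by (cases xs) auto

lemma walk_Cons: "walk ET (x # ys) \<longleftrightarrow> ys = [] \<or> {x, hd ys} \<in> ET \<and> walk ET ys"
  by (cases ys) auto

lemma walk_snoc: "xs \<noteq> [] \<Longrightarrow> walk ET (xs @ [y]) \<longleftrightarrow> walk ET xs \<and> {last xs, y} \<in> ET"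
  by (induction ET xs rule: walk.induct) auto

lemma walk_rev: "walk ET xs \<Longrightarrow> walk ET (rev xs)"
proof (induction xs)
  case (Cons x ys)
  show ?case
  proof (cases "ys = []")
    case False
    with Cons.prems have "{x, hd ys} \<in> ET" and "walk ET (rev ys)"
      using Cons.IH by (auto simp: walk_Cons)
    with False show ?thesis by (simp add: walk_snoc last_rev insert_commute)
  qed simp
qed simp

lemma walk_append: "walk ET xs \<Longrightarrow> walk ET ys \<Longrightarrow> last xs = hd ys \<Longrightarrow> walk ET (xs @ tl ys)"
proof (induction ET xs rule: walk.induct)
  case (2 ET x)
  then show ?case by (cases ys) (auto simp: walk_Cons)
qed auto

lemma connected_graphI_root:
  assumes "z \<in> VT"
    and to_root: "\<And>x. x \<in> VT \<Longrightarrow> \<exists>xs. walk ET xs \<and> set xs \<subseteq> VT \<and> hd xs = x \<and> last xs = z"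
  shows "connected_graph VT ET"
  unfolding connected_graph_def
proof (intro ballI)
  fix u v assume "u \<in> VT" "v \<in> VT"
  then obtain p q where p: "walk ET p" "set p \<subseteq> VT" "hd p = u" "last p = z"
    and q: "walk ET q" "set q \<subseteq> VT" "hd q = v" "last q = z"
    using to_root by meson
  have "p \<noteq> []" "q \<noteq> []" using p q walk_nonempty by auto
  let ?w = "p @ tl (rev q)"
  have "walk ET ?w"
    using p q \<open>q \<noteq> []\<close> by (intro walk_append walk_rev) (auto simp: hd_rev)
  moreover have "set ?w \<subseteq> VT"
    using p q by (cases "rev q") auto
  moreover have "hd ?w = u" using p \<open>p \<noteq> []\<close> by simp
  moreover have "last ?w = v"
    using p q \<open>q \<noteq> []\<close> by (cases "rev q") (auto simp: last_append hd_append hd_rev)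
  ultimately show "\<exists>xs. walk ET xs \<and> set xs \<subseteq> VT \<and> hd xs = u \<and> last xs = v"
    by blast
qed

section \<open>The graph K_{2,t}\<close>

abbreviation edge0 :: "nat \<Rightarrow> (nat + nat) set" where
  "edge0 j \<equiv> {Inl 0, Inr j}"

abbreviation edge1 :: "nat \<Rightarrow> (nat + nat) set" where
  "edge1 j \<equiv> {Inl 1, Inr j}"

lemma nat_less_2_cases: "a < 2 \<Longrightarrow> a = 0 \<or> a = (1::nat)"
  by auto

lemma K2_E_iff: "e \<in> K2_E t \<longleftrightarrow> (\<exists>i j. e = {Inl i, Inr j} \<and> i < 2 \<and> j < t)"
  unfolding K2_E_def by blast

lemma edge0_in_K2_E [simp]: "j < t \<Longrightarrow> edge0 j \<in> K2_E t"
  unfolding K2_E_iff by (intro exI[of _ 0] exI[of _ j]) simp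

text \<open>The second form is the simp normal form of the first, as One_nat_def is a simp rule.\<close>

lemma edge1_in_K2_E [simp]:
  "j < t \<Longrightarrow> edge1 j \<in> K2_E t"
  "j < t \<Longrightarrow> {Inl (Suc 0), Inr j} \<in> K2_E t"
  unfolding K2_E_iff by (intro exI[of _ 1] exI[of _ j]; simp)+

lemma K2_E_edge:
  assumes "{x, y} \<in> K2_E t"
  shows "\<exists>a p. a < 2 \<and> p < t \<and> (x = Inl a \<and> y = Inr p \<or> x = Inr p \<and> y = Inl a)"
  using assms unfolding K2_E_iff by (auto simp: doubleton_eq_iff)

lemma finite_K2_E: "finite (K2_E t)"
proof -
  have "K2_E t = (\<lambda>(i, j). {Inl i, Inr j}) ` ({..<2} \<times> {..<t})"
    unfolding K2_E_def by auto
  then show ?thesis by simp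
qed

lemma K2_E_eq_edges: "K2_E t = edge0 ` {..<t} \<union> edge1 ` {..<t}"
proof
  show "K2_E t \<subseteq> edge0 ` {..<t} \<union> edge1 ` {..<t}"
  proof
    fix e assume "e \<in> K2_E t"
    then obtain i j where "e = {Inl i, Inr j}" "i < 2" "j < t" unfolding K2_E_iff by blast
    then show "e \<in> edge0 ` {..<t} \<union> edge1 ` {..<t}" using nat_less_2_cases by blast
  qed
qed (use edge0_in_K2_E edge1_in_K2_E in blast)

lemma K2_cycle_from_leaf:
  assumes "ET \<subseteq> K2_E t" and "has_cycle ET"
  obtains xs p where "length xs \<ge> 3" "distinct xs" "walk ET xs" "{last xs, hd xs} \<in> ET"
    "hd xs = Inr p"
proof -
  obtain xs where len: "length xs \<ge> 3" and d: "distinct xs" and w: "walk ET xs"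
    and cl: "{last xs, hd xs} \<in> ET"
    using assms(2) unfolding has_cycle_def by blast
  obtain x0 x1 r where xs: "xs = x0 # x1 # r"
    using len by (cases xs; cases "tl xs") auto
  have e01: "{x0, x1} \<in> ET" using w xs by simp
  show thesis
  proof (cases x0)
    case (Inr p)
    then show thesis using that[of xs p] len d w cl xs by simp
  next
    case (Inl a)
    from K2_E_edge[of x0 x1 t] e01 assms(1) Inl obtain p where "x1 = Inr p" by auto
    let ?ys = "x1 # r @ [x0]"
    have "walk ET ?ys" using w cl xs walk_snoc[of "x1 # r" ET x0] by simp
    moreover have "{last ?ys, hd ?ys} \<in> ET" using e01 by simp
    moreover have "length ?ys \<ge> 3" "distinct ?ys" using len d xs by auto
    ultimately show thesis using that[of ?ys p] \<open>x1 = Inr p\<close> by simp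
  qed
qed

text \<open>A cycle of K_{2,t} alternates between the two centres and the leaves, and
  the centres cannot repeat, so it is a 4-cycle through two leaves joined to both centres.\<close>

lemma K2_cycle_two_leaves:
  assumes sub: "ET \<subseteq> K2_E t" and "has_cycle ET"
  obtains p q where "p \<noteq> q" "edge0 p \<in> ET" "edge1 p \<in> ET" "edge0 q \<in> ET" "edge1 q \<in> ET"
proof -
  obtain xs p where len: "length xs \<ge> 3" and d: "distinct xs" and w: "walk ET xs"
    and cl: "{last xs, hd xs} \<in> ET" and x0: "hd xs = Inr p"
    using K2_cycle_from_leaf[OF assms] .
  have nbr_Inr: "\<exists>a<2. y = Inl a" if "{Inr i, y} \<in> ET \<or> {y, Inr i} \<in> ET" for i y
    using that sub K2_E_edge by blast
  have nbr_Inl: "\<exists>i. y = Inr i" if "{Inl a, y} \<in> ET" for a y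
    using that sub K2_E_edge by blast
  have both: "edge0 i \<in> ET \<and> edge1 i \<in> ET"
    if "{Inl a, Inr i} \<in> ET" "{Inl b, Inr i} \<in> ET" "a \<noteq> b" "a < 2" "b < 2" for a b i
    using that by (auto dest!: nat_less_2_cases)
  obtain x1 x2 r where xs: "xs = Inr p # x1 # x2 # r"
    using len x0 by (cases xs; cases "tl xs"; cases "tl (tl xs)") auto
  obtain a where a: "a < 2" "x1 = Inl a" using nbr_Inr w xs by auto
  obtain q where q: "x2 = Inr q" using nbr_Inl w xs a by auto
  have "r \<noteq> []" using cl xs q nbr_Inr by fastforce
  then obtain x3 r' where r: "r = x3 # r'" by (cases r) auto
  obtain b where b: "b < 2" "x3 = Inl b" using nbr_Inr w xs q r by auto
  have "a \<noteq> b" "p \<noteq> q" using d xs a b q r by auto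
  have pq: "edge0 q \<in> ET \<and> edge1 q \<in> ET"
    using both[of a q b] w xs a b q r \<open>a \<noteq> b\<close> by (simp add: insert_commute)
  show thesis
  proof (cases r')
    case Nil
    then have "edge0 p \<in> ET \<and> edge1 p \<in> ET"
      using both[of a p b] w cl xs a b r \<open>a \<noteq> b\<close> by (simp add: insert_commute)
    then show thesis using that pq \<open>p \<noteq> q\<close> by blast
  next
    case (Cons x4 r'')
    obtain s where s: "x4 = Inr s" using nbr_Inl w xs r Cons b by auto
    have "r'' \<noteq> []" using cl xs r Cons s nbr_Inr by fastforce
    then obtain x5 r3 where "r'' = x5 # r3" by (cases r'') auto
    moreover obtain c where "c < 2" "x5 = Inl c"
      using nbr_Inr w xs r Cons s \<open>r'' = x5 # r3\<close> by auto
    ultimately have "c \<noteq> a" "c \<noteq> b" using d xs a b r Cons by auto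
    then show thesis using \<open>a \<noteq> b\<close> \<open>c < 2\<close> a b by linarith
  qed
qed

lemma K2_no_cycle:
  assumes "ET \<subseteq> K2_E t"
    and "\<And>p q. edge0 p \<in> ET \<Longrightarrow> edge1 p \<in> ET \<Longrightarrow> edge0 q \<in> ET \<Longrightarrow> edge1 q \<in> ET \<Longrightarrow> p = q"
  shows "\<not> has_cycle ET"
  using K2_cycle_two_leaves assms by metis

lemma K2_walk_between_centres:
  assumes "walk ET xs" "ET \<subseteq> K2_E t" "hd xs = Inl 0" "last xs = Inl 1"
  shows "\<exists>k<t. edge0 k \<in> ET \<and> edge1 k \<in> ET"
  using assms
proof (induction "length xs" arbitrary: xs rule: less_induct)
  case less
  have E: "\<And>x y. {x,y} \<in> ET \<Longrightarrow> \<exists>a p. a < 2 \<and> p < t \<and> (x = Inl a \<and> y = Inr p \<or> x = Inr p \<and> y = Inl a)"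
    using less.prems(2) K2_E_edge by blast
  obtain y z r where xs: "xs = Inl 0 # y # z # r"
    using less.prems(1,3,4) E by (cases xs; cases "tl xs"; cases "tl (tl xs)") force+
  obtain p where y: "y = Inr p" "p < t" using E[of "Inl 0" y] less.prems(1) xs by auto
  obtain b where z: "z = Inl b" "b < 2" using E[of y z] less.prems(1) xs y by auto
  show ?case
  proof (cases "b = 0")
    case True
    then show ?thesis
      using less.hyps[of "z # r"] less.prems xs z by simp
  next
    case False
    then have "b = 1" using z by auto
    then show ?thesis using less.prems(1) xs y z by (auto simp: insert_commute)
  qed
qed

lemma K2_tree_leaf_edge:
  assumes "is_tree VT ET" "ET \<subseteq> K2_E t" "Inr i \<in> VT" "y \<in> VT" "y \<noteq> Inr i"
  shows "\<exists>a<2. {Inl a, Inr i} \<in> ET"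
proof -
  obtain xs where w: "walk ET xs" "hd xs = Inr i" "last xs = y"
    using assms(1,3,4) unfolding is_tree_def connected_graph_def by blast
  then obtain z r where "xs = Inr i # z # r"
    using assms(5) by (cases xs; cases "tl xs") auto
  then have "{Inr i, z} \<in> ET" using w by simp
  with assms(2) K2_E_edge[of "Inr i" z t] obtain a where "a < 2" "z = Inl a" by blast
  then show ?thesis using \<open>{Inr i, z} \<in> ET\<close> by (auto simp: insert_commute)
qed

section \<open>Stars and hub trees\<close>

text \<open>The two kinds of trees used to connect three vertices: a star at a centre, and a
  hub tree, which joins the centres through the leaf k and attaches every leaf i in I to
  the first or second centre according to g i.\<close>

definition star_vertices :: "nat \<Rightarrow> nat set \<Rightarrow> (nat + nat) set" where
  "star_vertices a I = insert (Inl a) (Inr ` I)"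

definition star_edges :: "nat \<Rightarrow> nat set \<Rightarrow> (nat + nat) set set" where
  "star_edges a I = (\<lambda>i. {Inl a, Inr i}) ` I"

definition hub_vertices :: "nat \<Rightarrow> nat set \<Rightarrow> (nat + nat) set" where
  "hub_vertices k I = insert (Inl 0) (insert (Inl 1) (insert (Inr k) (Inr ` I)))"

definition hub_edges :: "nat \<Rightarrow> nat set \<Rightarrow> (nat \<Rightarrow> bool) \<Rightarrow> (nat + nat) set set" where
  "hub_edges k I g =
     insert (edge0 k) (insert (edge1 k) ((\<lambda>i. if g i then edge0 i else edge1 i) ` I))"

lemma star_tree:
  assumes "a < 2" "I \<subseteq> {..<t}"
  shows "star_vertices a I \<subseteq> K2_V t" "star_edges a I \<subseteq> K2_E t"
    "is_tree (star_vertices a I) (star_edges a I)"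
proof -
  have a: "a = 0 \<or> a = 1" using nat_less_2_cases[OF assms(1)] .
  show "star_vertices a I \<subseteq> K2_V t" using a assms(2) by (auto simp: star_vertices_def K2_V_def)
  show sub: "star_edges a I \<subseteq> K2_E t" using a assms(2) by (auto simp: star_edges_def)
  have "connected_graph (star_vertices a I) (star_edges a I)"
  proof (rule connected_graphI_root[of "Inl a"])
    fix x assume "x \<in> star_vertices a I"
    then consider "x = Inl a" | i where "i \<in> I" "x = Inr i"
      unfolding star_vertices_def by blast
    then show "\<exists>xs. walk (star_edges a I) xs \<and> set xs \<subseteq> star_vertices a I \<and>
      hd xs = x \<and> last xs = Inl a"
    proof cases
      case 1
      then show ?thesis by (intro exI[of _ "[Inl a]"]) (simp add: star_vertices_def)
    next
      case 2
      then show ?thesis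
        by (intro exI[of _ "[Inr i, Inl a]"])
          (auto simp: star_vertices_def star_edges_def insert_commute)
    qed
  qed (simp add: star_vertices_def)
  moreover have "\<not> has_cycle (star_edges a I)"
  proof (rule K2_no_cycle[OF sub])
    fix p q assume "edge0 p \<in> star_edges a I" "edge1 p \<in> star_edges a I"
    then show "p = q" by (auto simp: star_edges_def doubleton_eq_iff)
  qed
  ultimately show "is_tree (star_vertices a I) (star_edges a I)"
    by (auto simp: is_tree_def star_vertices_def star_edges_def)
qed

lemma hub_tree:
  assumes "k < t" "I \<subseteq> {..<t}" "k \<notin> I"
  shows "hub_vertices k I \<subseteq> K2_V t" "hub_edges k I g \<subseteq> K2_E t"
    "is_tree (hub_vertices k I) (hub_edges k I g)"
proof -
  show "hub_vertices k I \<subseteq> K2_V t" using assms by (auto simp: hub_vertices_def K2_V_def)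
  show sub: "hub_edges k I g \<subseteq> K2_E t" using assms by (auto simp: hub_edges_def)
  have "connected_graph (hub_vertices k I) (hub_edges k I g)"
  proof (rule connected_graphI_root[of "Inl 0"])
    fix x assume "x \<in> hub_vertices k I"
    then consider "x = Inl 0" | "x = Inl 1" | "x = Inr k" | i where "i \<in> I" "x = Inr i" "g i"
      | i where "i \<in> I" "x = Inr i" "\<not> g i"
      unfolding hub_vertices_def by blast
    then show "\<exists>xs. walk (hub_edges k I g) xs \<and> set xs \<subseteq> hub_vertices k I \<and>
      hd xs = x \<and> last xs = Inl 0"
    proof cases
      case 1
      then show ?thesis by (intro exI[of _ "[Inl 0]"]) (simp add: hub_vertices_def)
    next
      case 2
      then show ?thesis
        by (intro exI[of _ "[Inl 1, Inr k, Inl 0]"])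
          (auto simp: hub_vertices_def hub_edges_def insert_commute)
    next
      case 3
      then show ?thesis
        by (intro exI[of _ "[Inr k, Inl 0]"])
          (auto simp: hub_vertices_def hub_edges_def insert_commute)
    next
      case 4
      then show ?thesis
        by (intro exI[of _ "[Inr i, Inl 0]"])
          (auto simp: hub_vertices_def hub_edges_def insert_commute)
    next
      case 5
      then have "edge1 i \<in> hub_edges k I g" by (force simp: hub_edges_def)
      with 5 show ?thesis
        by (intro exI[of _ "[Inr i, Inl 1, Inr k, Inl 0]"])
          (auto simp: hub_vertices_def hub_edges_def insert_commute)
    qed
  qed (simp add: hub_vertices_def)
  moreover have "\<not> has_cycle (hub_edges k I g)"
  proof (rule K2_no_cycle[OF sub])
    have "p = k" if "edge0 p \<in> hub_edges k I g" "edge1 p \<in> hub_edges k I g" for p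
    proof (rule ccontr)
      assume "p \<noteq> k"
      with that obtain i i' where "i \<in> I" "edge0 p = (if g i then edge0 i else edge1 i)"
        "i' \<in> I" "edge1 p = (if g i' then edge0 i' else edge1 i')"
        by (auto simp: hub_edges_def doubleton_eq_iff)
      then have "g i" "i = p" "\<not> g i'" "i' = p" by (auto split: if_splits simp: doubleton_eq_iff)
      then show False by simp
    qed
    then show "p = q" if "edge0 p \<in> hub_edges k I g" "edge1 p \<in> hub_edges k I g"
      "edge0 q \<in> hub_edges k I g" "edge1 q \<in> hub_edges k I g" for p q
      using that by blast
  qed
  ultimately show "is_tree (hub_vertices k I) (hub_edges k I g)"
    by (auto simp: is_tree_def hub_vertices_def hub_edges_def)
qed

section \<open>Rainbow trees of a colouring\<close>

lemma K2_three_vertices_cases: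
  assumes "S \<subseteq> K2_V t" "card S = 3"
  obtains (centres) p where "p < t" "S = {Inl 0, Inl 1, Inr p}"
  | (centre) a p q where "a < 2" "p < t" "q < t" "p \<noteq> q" "S = {Inl a, Inr p, Inr q}"
  | (leaves) p q r where "p < t" "q < t" "r < t" "p \<noteq> q" "p \<noteq> r" "q \<noteq> r"
      "S = {Inr p, Inr q, Inr r}"
proof -
  define C where "C = Inl -` S"
  define L where "L = Inr -` S"
  have S: "S = Inl ` C \<union> Inr ` L"
    unfolding C_def L_def by (auto intro: sum.exhaust_sel)
  have C: "C \<subseteq> {0, 1}" and L: "L \<subseteq> {..<t}"
    using assms(1) unfolding C_def L_def K2_V_def by auto
  then have "finite C" "finite L" by (auto intro: finite_subset)
  then have "card S = card C + card L"
    unfolding S by (subst card_Un_disjoint) (auto simp: card_image)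
  then have card: "card C + card L = 3"
    using assms(2) by simp
  have "card C \<le> 2" using card_mono[OF _ C] by simp
  then consider "card C = 2" | "card C = 1" | "card C = 0" by linarith
  then show thesis
  proof cases
    case 1
    then have "C = {0, 1}" using card_subset_eq[OF _ C] by simp
    moreover obtain p where "L = {p}" using 1 card card_1_singletonE by auto
    ultimately show thesis using centres[of p] L unfolding S by auto
  next
    case 2
    then obtain a where "C = {a}" using card_1_singletonE by blast
    moreover obtain p q where "L = {p, q}" "p \<noteq> q" using 2 card card_2_iff[of L] by auto
    ultimately show thesis using centre[of a p q] C L unfolding S by (auto simp: insert_commute)
  next
    case 3
    then have "C = {}" using \<open>finite C\<close> by simp
    moreover obtain p q r where "L = {p, q, r}" "p \<noteq> q" "q \<noteq> r" "p \<noteq> r"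
      using 3 card card_3_iff[of L] by auto
    ultimately show thesis using leaves[of p q r] L unfolding S by auto
  qed
qed

text \<open>A colouring of K_{2,t} is recorded by the colours A j and B j of the edges joining
  the leaf Inr j to the centres Inl 0 and Inl 1. The predicate hub_rainbow2 A B k i j says
  that a hub tree through the leaf k reaching the leaves i and j can be chosen rainbow, and
  hub_rainbow3 is the same for three leaves. The leaves i, j, l are joined by a rainbow star
  or a rainbow hub tree with hub among them (triple_rainbow_inner), or with hub outside
  them among the first n leaves (triple_rainbow).\<close>

definition hub_rainbow2 :: "(nat \<Rightarrow> nat) \<Rightarrow> (nat \<Rightarrow> nat) \<Rightarrow> nat \<Rightarrow> nat \<Rightarrow> nat \<Rightarrow> bool" where
  "hub_rainbow2 A B k i j \<longleftrightarrow> (\<exists>x\<in>{A i, B i}. \<exists>y\<in>{A j, B j}. distinct [A k, B k, x, y])"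

definition hub_rainbow3 :: "(nat \<Rightarrow> nat) \<Rightarrow> (nat \<Rightarrow> nat) \<Rightarrow> nat \<Rightarrow> nat \<Rightarrow> nat \<Rightarrow> nat \<Rightarrow> bool" where
  "hub_rainbow3 A B k i j l \<longleftrightarrow>
     (\<exists>x\<in>{A i, B i}. \<exists>y\<in>{A j, B j}. \<exists>z\<in>{A l, B l}. distinct [A k, B k, x, y, z])"

definition triple_rainbow_inner :: "(nat \<Rightarrow> nat) \<Rightarrow> (nat \<Rightarrow> nat) \<Rightarrow> nat \<Rightarrow> nat \<Rightarrow> nat \<Rightarrow> bool" where
  "triple_rainbow_inner A B i j l \<longleftrightarrow> distinct [A i, A j, A l] \<or> distinct [B i, B j, B l] \<or>
     hub_rainbow2 A B i j l \<or> hub_rainbow2 A B j i l \<or> hub_rainbow2 A B l i j"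

definition triple_rainbow :: "(nat \<Rightarrow> nat) \<Rightarrow> (nat \<Rightarrow> nat) \<Rightarrow> nat \<Rightarrow> nat \<Rightarrow> nat \<Rightarrow> nat \<Rightarrow> bool" where
  "triple_rainbow A B n i j l \<longleftrightarrow> triple_rainbow_inner A B i j l \<or>
     (\<exists>k\<in>set [0..<n]. k \<noteq> i \<and> k \<noteq> j \<and> k \<noteq> l \<and> hub_rainbow3 A B k i j l)"

definition K2_rainbow_connected :: "nat \<Rightarrow> ((nat + nat) set \<Rightarrow> nat) \<Rightarrow> (nat + nat) set \<Rightarrow> bool" where
  "K2_rainbow_connected t col S \<longleftrightarrow> (\<exists>VT ET. S_tree (K2_V t) (K2_E t) S VT ET \<and> rainbow col ET)"

lemma rainbow_distinct_colours:
  "rainbow col ET \<Longrightarrow> set es \<subseteq> ET \<Longrightarrow> distinct es \<Longrightarrow> distinct (map col es)"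
  unfolding rainbow_def by (meson distinct_map inj_on_subset)

locale K2_colouring =
  fixes t :: nat and col :: "(nat + nat) set \<Rightarrow> nat" and A B :: "nat \<Rightarrow> nat"
  assumes col_edge0: "j < t \<Longrightarrow> col (edge0 j) = A j"
    and col_edge1: "j < t \<Longrightarrow> col (edge1 j) = B j"
begin

lemma star_rainbow_connected:
  assumes "a < 2" "set xs \<subseteq> {..<t}" "distinct (map (if a = 0 then A else B) xs)"
    and "S \<subseteq> star_vertices a (set xs)"
  shows "K2_rainbow_connected t col S"
proof -
  let ?es = "map (\<lambda>i. {Inl a, Inr i}) xs"
  have "map col ?es = map (if a = 0 then A else B) xs"
    using assms(1,2) col_edge0 col_edge1 by (auto dest!: nat_less_2_cases)
  then have "distinct (map col ?es)" using assms(3) by (simp only:)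
  then have "inj_on col (set ?es)" by (simp only: distinct_map)
  then have "rainbow col (star_edges a (set xs))"
    unfolding rainbow_def star_edges_def by simp
  then show ?thesis
    unfolding K2_rainbow_connected_def S_tree_def
    by (intro exI[of _ "star_vertices a (set xs)"] exI[of _ "star_edges a (set xs)"])
      (simp add: star_tree[OF assms(1,2)] assms(4))
qed

lemma hub_rainbow_connected:
  assumes "k < t" "set xs \<subseteq> {..<t}" "k \<notin> set xs" "\<forall>i\<in>set xs. f i \<in> {A i, B i}"
    and "distinct (A k # B k # map f xs)" and "S \<subseteq> hub_vertices k (set xs)"
  shows "K2_rainbow_connected t col S"
proof -
  define g where "g i \<longleftrightarrow> f i = A i" for i
  let ?es = "edge0 k # edge1 k # map (\<lambda>i. if g i then edge0 i else edge1 i) xs"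
  have "map col ?es = A k # B k # map f xs"
    using assms(1,2,4) col_edge0 col_edge1 by (force simp: g_def)
  then have "distinct (map col ?es)" using assms(5) by (simp only:)
  then have "inj_on col (set ?es)" by (simp only: distinct_map)
  then have "rainbow col (hub_edges k (set xs) g)"
    unfolding rainbow_def hub_edges_def by simp
  then show ?thesis
    unfolding K2_rainbow_connected_def S_tree_def
    by (intro exI[of _ "hub_vertices k (set xs)"] exI[of _ "hub_edges k (set xs) g"])
      (simp add: hub_tree[OF assms(1-3)] assms(6))
qed

lemma rainbow_connected_centres_leaf:
  assumes "j < t" "A j \<noteq> B j"
  shows "K2_rainbow_connected t col {Inl 0, Inl 1, Inr j}"
  using assms by (intro hub_rainbow_connected[where xs="[]"]) (auto simp: hub_vertices_def)

lemma rainbow_connected_centre_leaves: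
  assumes "a < 2" "i < t" "j < t" "i \<noteq> j" "A i \<noteq> B i" "A j \<noteq> B j"
    and "A i = A j \<Longrightarrow> B i \<noteq> B j"
  shows "K2_rainbow_connected t col {Inl a, Inr i, Inr j}"
proof -
  have hub: "{Inl a, Inr i, Inr j} \<subseteq> hub_vertices i (set [j])"
    using assms(1) by (auto simp: hub_vertices_def dest!: nat_less_2_cases)
  consider "a = 0" | "a = 1" using assms(1) nat_less_2_cases by blast
  then show ?thesis
  proof cases
    case 1
    show ?thesis
    proof (cases "A i = A j")
      case True
      with assms hub show ?thesis by (intro hub_rainbow_connected[where xs="[j]" and f=B]) auto
    next
      case False
      with 1 assms show ?thesis
        by (intro star_rainbow_connected[where xs="[i, j]"]) (auto simp: star_vertices_def)
    qed
  next
    case 2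
    show ?thesis
    proof (cases "B i = B j")
      case True
      with assms hub show ?thesis by (intro hub_rainbow_connected[where xs="[j]" and f=A]) auto
    next
      case False
      with 2 assms show ?thesis
        by (intro star_rainbow_connected[where xs="[i, j]"]) (auto simp: star_vertices_def)
    qed
  qed
qed

lemma rainbow_connected_three_leaves:
  assumes "i < t" "j < t" "l < t" "i \<noteq> j" "i \<noteq> l" "j \<noteq> l"
    and "triple_rainbow A B t i j l"
  shows "K2_rainbow_connected t col {Inr i, Inr j, Inr l}"
proof -
  from assms(7) consider "distinct [A i, A j, A l]" | "distinct [B i, B j, B l]"
    | "hub_rainbow2 A B i j l" | "hub_rainbow2 A B j i l" | "hub_rainbow2 A B l i j"
    | k where "k < t" "k \<notin> {i, j, l}" "hub_rainbow3 A B k i j l"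
    unfolding triple_rainbow_def triple_rainbow_inner_def by auto
  then show ?thesis
  proof cases
    case 1
    with assms show ?thesis
      by (intro star_rainbow_connected[where xs="[i, j, l]" and a=0]) (auto simp: star_vertices_def)
  next
    case 2
    with assms show ?thesis
      by (intro star_rainbow_connected[where xs="[i, j, l]" and a=1]) (auto simp: star_vertices_def)
  next
    case 3
    then obtain x y where "x \<in> {A j, B j}" "y \<in> {A l, B l}" "distinct [A i, B i, x, y]"
      unfolding hub_rainbow2_def by blast
    with assms show ?thesis
      by (intro hub_rainbow_connected[where k=i and xs="[j, l]" and f="\<lambda>m. if m = j then x else y"])
        (auto simp: hub_vertices_def)
  next
    case 4
    then obtain x y where "x \<in> {A i, B i}" "y \<in> {A l, B l}" "distinct [A j, B j, x, y]"
      unfolding hub_rainbow2_def by blast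
    with assms show ?thesis
      by (intro hub_rainbow_connected[where k=j and xs="[i, l]" and f="\<lambda>m. if m = i then x else y"])
        (auto simp: hub_vertices_def)
  next
    case 5
    then obtain x y where "x \<in> {A i, B i}" "y \<in> {A j, B j}" "distinct [A l, B l, x, y]"
      unfolding hub_rainbow2_def by blast
    with assms show ?thesis
      by (intro hub_rainbow_connected[where k=l and xs="[i, j]" and f="\<lambda>m. if m = i then x else y"])
        (auto simp: hub_vertices_def)
  next
    case (6 k)
    then obtain x y z where "x \<in> {A i, B i}" "y \<in> {A j, B j}" "z \<in> {A l, B l}"
      "distinct [A k, B k, x, y, z]"
      unfolding hub_rainbow3_def by blast
    with assms 6 show ?thesis
      by (intro hub_rainbow_connected[where k=k and xs="[i, j, l]"
            and f="\<lambda>m. if m = i then x else if m = j then y else z"])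
        (auto simp: hub_vertices_def)
  qed
qed

lemma three_rainbow_coloringI:
  assumes "\<And>j. j < t \<Longrightarrow> A j \<noteq> B j"
    and "\<And>i j. i < t \<Longrightarrow> j < t \<Longrightarrow> i \<noteq> j \<Longrightarrow> A i = A j \<Longrightarrow> B i \<noteq> B j"
    and "\<And>i j l. i < t \<Longrightarrow> j < t \<Longrightarrow> l < t \<Longrightarrow> i \<noteq> j \<Longrightarrow> i \<noteq> l \<Longrightarrow> j \<noteq> l \<Longrightarrow>
      triple_rainbow A B t i j l"
  shows "three_rainbow_coloring (K2_V t) (K2_E t) col"
  unfolding three_rainbow_coloring_def
proof (intro allI impI, elim conjE)
  fix S assume "S \<subseteq> K2_V t" "card S = 3"
  then have "K2_rainbow_connected t col S"
  proof (cases rule: K2_three_vertices_cases)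
    case (centres p)
    then show ?thesis using rainbow_connected_centres_leaf assms(1) by simp
  next
    case (centre a p q)
    then show ?thesis using rainbow_connected_centre_leaves assms(1,2) by simp
  next
    case (leaves p q r)
    then show ?thesis using rainbow_connected_three_leaves assms(3) by simp
  qed
  then show "\<exists>VT ET. S_tree (K2_V t) (K2_E t) S VT ET \<and> rainbow col ET"
    unfolding K2_rainbow_connected_def .
qed

lemma col_leaf_edge: "a < 2 \<Longrightarrow> p < t \<Longrightarrow> col {Inl a, Inr p} \<in> {A p, B p}"
  using col_edge0 col_edge1 by (auto dest!: nat_less_2_cases)

lemma hub_colours_distinct:
  assumes "rainbow col ET" "k < t" "edge0 k \<in> ET" "edge1 k \<in> ET"
    and "set es \<subseteq> ET" "distinct es" "edge0 k \<notin> set es" "edge1 k \<notin> set es"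
  shows "distinct (A k # B k # map col es)"
proof -
  have "distinct (map col (edge0 k # edge1 k # es))"
    using assms(3-8) by (intro rainbow_distinct_colours[OF assms(1)]) auto
  then show ?thesis using assms(2) col_edge0 col_edge1 by simp
qed

text \<open>Conversely, a rainbow tree through three leaves is either a star at one centre or
  contains both centres, and then both edges at some leaf k.\<close>

lemma rainbow_S_tree_three_leaves:
  assumes st: "S_tree (K2_V t) (K2_E t) S VT ET" and rb: "rainbow col ET"
    and S: "Inr i \<in> S" "Inr j \<in> S" "Inr l \<in> S" and d: "i \<noteq> j" "i \<noteq> l" "j \<noteq> l"
  shows "triple_rainbow_inner A B i j l \<or> (\<exists>k<t. hub_rainbow3 A B k i j l)"
proof -
  have sub: "ET \<subseteq> K2_E t" and tr: "is_tree VT ET" and "S \<subseteq> VT" "S \<subseteq> K2_V t"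
    using st unfolding S_tree_def by auto
  then have lt: "i < t" "j < t" "l < t" and V: "Inr i \<in> VT" "Inr j \<in> VT" "Inr l \<in> VT"
    using S by (auto simp: K2_V_def)
  obtain ai where ai: "ai < 2" "{Inl ai, Inr i} \<in> ET"
    using K2_tree_leaf_edge[OF tr sub V(1,2)] d by auto
  obtain aj where aj: "aj < 2" "{Inl aj, Inr j} \<in> ET"
    using K2_tree_leaf_edge[OF tr sub V(2,1)] d by auto
  obtain al where al: "al < 2" "{Inl al, Inr l} \<in> ET"
    using K2_tree_leaf_edge[OF tr sub V(3,1)] d by auto
  note a = ai(1) aj(1) al(1) and e = ai(2) aj(2) al(2)
  define ci cj cl
    where "ci = col {Inl ai, Inr i}" "cj = col {Inl aj, Inr j}" "cl = col {Inl al, Inr l}"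
  have c: "ci \<in> {A i, B i}" "cj \<in> {A j, B j}" "cl \<in> {A l, B l}"
    unfolding ci_cj_cl_def using col_leaf_edge a lt by auto
  show ?thesis
  proof (cases "ai = aj \<and> aj = al")
    case True
    have "distinct [ci, cj, cl]"
      using rainbow_distinct_colours[OF rb, of "[{Inl ai, Inr i}, {Inl aj, Inr j}, {Inl al, Inr l}]"]
        e d
      unfolding ci_cj_cl_def by (simp add: doubleton_eq_iff)
    moreover have "ai = 0 \<or> ai = 1" using a nat_less_2_cases by blast
    ultimately show ?thesis
      using True col_edge0 col_edge1 lt unfolding triple_rainbow_inner_def ci_cj_cl_def by auto
  next
    case False
    have "Inl ai \<in> VT" "Inl aj \<in> VT" "Inl al \<in> VT"
      using e tr unfolding is_tree_def by blast+
    moreover have "0 \<in> {ai, aj, al}" "1 \<in> {ai, aj, al}"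
      using False a by auto
    ultimately have "Inl 0 \<in> VT" "Inl 1 \<in> VT" by auto
    then obtain xs where "walk ET xs" "hd xs = Inl 0" "last xs = Inl 1"
      using tr unfolding is_tree_def connected_graph_def by blast
    then obtain k where k: "k < t" "edge0 k \<in> ET" "edge1 k \<in> ET"
      using K2_walk_between_centres sub by blast
    have hub: "distinct (A k # B k # map col es)"
      if "set es \<subseteq> ET" "distinct es" "edge0 k \<notin> set es" "edge1 k \<notin> set es" for es
      using hub_colours_distinct[OF rb k] that by blast
    consider "k = i" | "k = j" | "k = l" | "k \<notin> {i, j, l}" by blast
    then show ?thesis
    proof cases
      case 1
      then have "distinct [A k, B k, cj, cl]"
        using hub[of "[{Inl aj, Inr j}, {Inl al, Inr l}]"] e d
        unfolding ci_cj_cl_def by (auto simp: doubleton_eq_iff)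
      then have "hub_rainbow2 A B i j l" using c 1 unfolding hub_rainbow2_def by blast
      then show ?thesis unfolding triple_rainbow_inner_def by simp
    next
      case 2
      then have "distinct [A k, B k, ci, cl]"
        using hub[of "[{Inl ai, Inr i}, {Inl al, Inr l}]"] e d
        unfolding ci_cj_cl_def by (auto simp: doubleton_eq_iff)
      then have "hub_rainbow2 A B j i l" using c 2 unfolding hub_rainbow2_def by blast
      then show ?thesis unfolding triple_rainbow_inner_def by simp
    next
      case 3
      then have "distinct [A k, B k, ci, cj]"
        using hub[of "[{Inl ai, Inr i}, {Inl aj, Inr j}]"] e d
        unfolding ci_cj_cl_def by (auto simp: doubleton_eq_iff)
      then have "hub_rainbow2 A B l i j" using c 3 unfolding hub_rainbow2_def by blast
      then show ?thesis unfolding triple_rainbow_inner_def by simp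
    next
      case 4
      then have "distinct [A k, B k, ci, cj, cl]"
        using hub[of "[{Inl ai, Inr i}, {Inl aj, Inr j}, {Inl al, Inr l}]"] e d
        unfolding ci_cj_cl_def by (auto simp: doubleton_eq_iff)
      then have "hub_rainbow3 A B k i j l" using c 4 unfolding hub_rainbow3_def by blast
      then show ?thesis using k(1) by blast
    qed
  qed
qed

end

section \<open>Bounds on the number of leaves\<close>

lemma length_distinct_le: "distinct xs \<Longrightarrow> set xs \<subseteq> {..<n} \<Longrightarrow> length xs \<le> (n::nat)"
  using card_mono[of "{..<n}" "set xs"] distinct_card[of xs] by simp

lemma card_le_mult_card_if_fibres_le:
  assumes "finite B" "f ` A \<subseteq> B" "\<And>y. y \<in> B \<Longrightarrow> card {x \<in> A. f x = y} \<le> k"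
  shows "card A \<le> k * card B"
proof -
  have "A = (\<Union>y\<in>B. {x \<in> A. f x = y})" using assms(2) by blast
  then have "card A \<le> (\<Sum>y\<in>B. card {x \<in> A. f x = y})"
    using card_UN_le[OF assms(1)] by metis
  also have "\<dots> \<le> k * card B"
    using sum_bounded_above[of B _ k] assms(3) by (simp add: mult.commute)
  finally show ?thesis .
qed

lemma card_ge_3_obtains:
  assumes "3 \<le> card X"
  obtains x y z where "x \<in> X" "y \<in> X" "z \<in> X" "x \<noteq> y" "x \<noteq> z" "y \<noteq> z"
proof -
  obtain S where "S \<subseteq> X" "card S = 3" using obtain_subset_with_card_n[OF assms] by metis
  then show thesis using that card_3_iff[of S] by auto
qed

lemma hub_rainbow2_swap: "hub_rainbow2 B A k i j = hub_rainbow2 A B k i j"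
proof -
  have "distinct [B k, A k, x, y] = distinct [A k, B k, x, y]" for x y by auto
  moreover have "{B i, A i} = {A i, B i}" "{B j, A j} = {A j, B j}" by auto
  ultimately show ?thesis unfolding hub_rainbow2_def by simp
qed

lemma triple_rainbow_inner_swap: "triple_rainbow_inner B A i j l = triple_rainbow_inner A B i j l"
  unfolding triple_rainbow_inner_def hub_rainbow2_swap[of B A] by blast

text \<open>Moving the six colours into lists lets the following case analyses run over free
  colour variables; unfolding them directly in terms of A and B makes auto blow up.\<close>

lemma triple_rainbow_inner_nth:
  "triple_rainbow_inner A B i j l \<longleftrightarrow>
    triple_rainbow_inner ((!) [A i, A j, A l]) ((!) [B i, B j, B l]) 0 1 2"
  unfolding triple_rainbow_inner_def hub_rainbow2_def by simp

lemma triple_rainbow_inner_same_first: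
  assumes "triple_rainbow_inner A B i j l" "A i = A j" "A j = A l"
  shows "distinct [B i, B j, B l]"
proof -
  have shape: "triple_rainbow_inner ((!) [a, a, a]) ((!) [b, c, d]) 0 1 2 \<Longrightarrow> distinct [b, c, d]"
    for a b c d :: nat
    unfolding triple_rainbow_inner_def hub_rainbow2_def by auto
  have "triple_rainbow_inner ((!) [A i, A i, A i]) ((!) [B i, B j, B l]) 0 1 2"
    using assms triple_rainbow_inner_nth[of A B i j l] by simp
  then show ?thesis by (rule shape)
qed

lemma inj_on_second_if_first_constant:
  assumes "3 \<le> card X" "\<And>x y. x \<in> X \<Longrightarrow> y \<in> X \<Longrightarrow> A x = A y"
    and "\<And>i j l. i \<in> X \<Longrightarrow> j \<in> X \<Longrightarrow> l \<in> X \<Longrightarrow> i \<noteq> j \<Longrightarrow> i \<noteq> l \<Longrightarrow> j \<noteq> l \<Longrightarrow>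
      triple_rainbow_inner A B i j l"
  shows "inj_on B X"
proof (rule inj_onI, rule ccontr)
  fix x y assume xy: "x \<in> X" "y \<in> X" "B x = B y" "x \<noteq> y"
  have "card {x, y} < card X" using assms(1) xy(4) by simp
  then obtain z where z: "z \<in> X" "z \<noteq> x" "z \<noteq> y"
    by (metis card_mono finite.emptyI finite.insertI insert_iff not_le subsetI)
  have "distinct [B x, B y, B z]"
    using triple_rainbow_inner_same_first[OF assms(3)[OF xy(1,2) z(1) xy(4) z(2,3)[symmetric]]]
      assms(2) xy(1,2) z(1) by blast
  with xy(3) show False by simp
qed

lemma triple_rainbow_inner_two_shared:
  assumes "triple_rainbow_inner A B p q r" "A q = A p" "B r = B p" "A r \<noteq> A p" "B q \<noteq> B p"
  shows "distinct [A p, A r, B p, B q]"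
proof -
  have shape: "triple_rainbow_inner ((!) [a, a, c]) ((!) [b, d, b]) 0 1 2 \<Longrightarrow> c \<noteq> a \<Longrightarrow> d \<noteq> b \<Longrightarrow>
    distinct [a, c, b, d]" for a b c d :: nat
    unfolding triple_rainbow_inner_def hub_rainbow2_def by auto
  have "triple_rainbow_inner ((!) [A p, A p, A r]) ((!) [B p, B q, B p]) 0 1 2"
    using assms(1-3) triple_rainbow_inner_nth[of A B p q r] by simp
  then show ?thesis using shape assms(4,5) by blast
qed

text \<open>If a colour class X of A contains three leaves i, j, l, their B-colours are distinct.
  A leaf outside X sharing one of these B-colours would force five distinct colours, so the
  leaves outside X have B-colours outside them, and these coincide (again by counting). On
  an A-constant or B-constant set of at least three leaves the other colour is injective,
  so both sets have at most four leaves.\<close>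

lemma four_colours_leaf_bound:
  assumes col: "\<And>j. j < t \<Longrightarrow> A j < 4 \<and> B j < 4"
    and T: "\<And>i j l. i < t \<Longrightarrow> j < t \<Longrightarrow> l < t \<Longrightarrow> i \<noteq> j \<Longrightarrow> i \<noteq> l \<Longrightarrow> j \<noteq> l \<Longrightarrow>
      triple_rainbow_inner A B i j l"
  shows "t \<le> 8"
proof (cases "\<forall>c<4. card {j \<in> {..<t}. A j = c} \<le> 2")
  case True
  then have "card {..<t} \<le> 2 * card {..<4::nat}"
    using col by (intro card_le_mult_card_if_fibres_le[where f=A]) auto
  then show ?thesis by simp
next
  case False
  then obtain c where "\<not> card {j \<in> {..<t}. A j = c} \<le> 2" by auto
  then have "3 \<le> card {j \<in> {..<t}. A j = c}" by simp
  define X where "X = {j \<in> {..<t}. A j = c}"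
  obtain i j l where ijl: "i \<in> X" "j \<in> X" "l \<in> X" "i \<noteq> j" "i \<noteq> l" "j \<noteq> l"
    using \<open>3 \<le> card _\<close> unfolding X_def[symmetric] by (rule card_ge_3_obtains)
  have lt: "i < t" "j < t" "l < t" and Ac: "A i = c" "A j = c" "A l = c"
    using ijl by (auto simp: X_def)
  have dB: "distinct [B i, B j, B l]"
    using triple_rainbow_inner_same_first[OF T[OF lt ijl(4-6)]] Ac by simp
  define Y where "Y = {r \<in> {..<t}. B r \<notin> {B i, B j, B l}}"
  have five: False if "distinct [x1, x2, x3, x4, x5]" "set [x1, x2, x3, x4, x5] \<subseteq> {..<4}"
    for x1 x2 x3 x4 x5 :: nat
    using length_distinct_le[OF that] by simp
  have Y_const: "B r = B r'" if "r \<in> Y" "r' \<in> Y" for r r'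
    using five[of "B r" "B r'" "B i" "B j" "B l"] that dB col lt unfolding Y_def by auto
  have outside: "B r \<noteq> B p"
    if "p \<in> X" "q \<in> X" "s \<in> X" "q \<noteq> p" "s \<noteq> p" "distinct [B p, B q, B s]"
      "r < t" "A r \<noteq> c" for p q s r
  proof
    assume "B r = B p"
    have "p < t" "q < t" "s < t" "A p = c" "A q = c" "A s = c" using that(1-3) by (auto simp: X_def)
    then have "r \<noteq> p" "r \<noteq> q" "r \<noteq> s" using that(8) by auto
    have "distinct [A p, A r, B p, B q]" "distinct [A p, A r, B p, B s]"
      using triple_rainbow_inner_two_shared[OF T[of p q r]]
        triple_rainbow_inner_two_shared[OF T[of p s r]]
        \<open>p < t\<close> \<open>q < t\<close> \<open>s < t\<close> \<open>A p = c\<close> \<open>A q = c\<close> \<open>A s = c\<close> \<open>B r = B p\<close>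
        \<open>r \<noteq> p\<close> \<open>r \<noteq> q\<close> \<open>r \<noteq> s\<close> that by auto
    then have "distinct [A p, A r, B p, B q, B s]" using that(6) by auto
    then show False
      using five[of "A p" "A r" "B p" "B q" "B s"] col[OF \<open>p < t\<close>] col[OF \<open>r < t\<close>]
        col[OF \<open>q < t\<close>] col[OF \<open>s < t\<close>] by auto
  qed
  have "B r \<notin> {B i, B j, B l}" if "r < t" "A r \<noteq> c" for r
    using outside[of i j l r] outside[of j i l r] outside[of l i j r] ijl dB that by auto
  then have "{..<t} \<subseteq> X \<union> Y" unfolding X_def Y_def by auto
  have small: "card Z \<le> 4" if "3 \<le> card Z \<Longrightarrow> inj_on f Z" "f ` Z \<subseteq> {..<4}" for Z and f :: "nat \<Rightarrow> nat"
  proof (cases "3 \<le> card Z")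
    case True
    then have "card Z = card (f ` Z)" using that(1) by (simp add: card_image)
    also have "\<dots> \<le> 4" using card_mono[OF _ that(2)] by simp
    finally show ?thesis .
  qed simp
  have "card X \<le> 4"
  proof (rule small[where f=B])
    show "inj_on B X" if "3 \<le> card X"
      by (rule inj_on_second_if_first_constant[where A=A, OF that]) (auto simp: X_def intro: T)
  qed (use col in \<open>auto simp: X_def\<close>)
  moreover have "card Y \<le> 4"
  proof (rule small[where f=A])
    show "inj_on A Y" if "3 \<le> card Y"
      by (rule inj_on_second_if_first_constant[OF that Y_const])
        (auto simp: Y_def triple_rainbow_inner_swap intro: T)
  qed (use col in \<open>auto simp: Y_def\<close>)
  ultimately have "card (X \<union> Y) \<le> 8" using card_Un_le[of X Y] by simp
  then show ?thesis using card_mono[OF _ \<open>{..<t} \<subseteq> X \<union> Y\<close>] by (simp add: X_def Y_def)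
qed

lemma distinct_representatives:
  assumes "triple_rainbow_inner A B i j l \<or> (\<exists>k. hub_rainbow3 A B k i j l)"
  shows "\<exists>x\<in>{A i, B i}. \<exists>y\<in>{A j, B j}. \<exists>z\<in>{A l, B l}. distinct [x, y, z]"
proof -
  from assms consider "distinct [A i, A j, A l]" | "distinct [B i, B j, B l]"
    | "hub_rainbow2 A B i j l" | "hub_rainbow2 A B j i l" | "hub_rainbow2 A B l i j"
    | k where "hub_rainbow3 A B k i j l"
    unfolding triple_rainbow_inner_def by blast
  then show ?thesis
  proof cases
    case 3
    then obtain y z where "y \<in> {A j, B j}" "z \<in> {A l, B l}" "distinct [A i, B i, y, z]"
      unfolding hub_rainbow2_def by blast
    then show ?thesis by (intro bexI[of _ "A i"] bexI[of _ y] bexI[of _ z]) auto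
  next
    case 4
    then obtain x z where "x \<in> {A i, B i}" "z \<in> {A l, B l}" "distinct [A j, B j, x, z]"
      unfolding hub_rainbow2_def by blast
    then show ?thesis by (intro bexI[of _ x] bexI[of _ "A j"] bexI[of _ z]) auto
  next
    case 5
    then obtain x y where "x \<in> {A i, B i}" "y \<in> {A j, B j}" "distinct [A l, B l, x, y]"
      unfolding hub_rainbow2_def by blast
    then show ?thesis by (intro bexI[of _ x] bexI[of _ y] bexI[of _ "A l"]) auto
  next
    case 6
    then show ?thesis unfolding hub_rainbow3_def by auto
  qed blast+
qed

definition colour_pair :: "nat \<Rightarrow> nat \<Rightarrow> nat set" where
  "colour_pair a b = (if a \<noteq> b then {a, b} else if a = 0 then {0, 1} else {0, a})"

lemma colour_pair: "{a, b} \<subseteq> colour_pair a b" "card (colour_pair a b) = 2"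
  "a < n \<Longrightarrow> b < n \<Longrightarrow> 1 < n \<Longrightarrow> colour_pair a b \<subseteq> {..<n}"
  unfolding colour_pair_def by auto

lemma five_colours_leaf_bound:
  fixes A B :: "nat \<Rightarrow> nat"
  assumes col: "\<And>j. j < t \<Longrightarrow> A j < 5 \<and> B j < 5"
    and T: "\<And>i j l. i < t \<Longrightarrow> j < t \<Longrightarrow> l < t \<Longrightarrow> i \<noteq> j \<Longrightarrow> i \<noteq> l \<Longrightarrow> j \<noteq> l \<Longrightarrow>
      \<exists>x\<in>{A i, B i}. \<exists>y\<in>{A j, B j}. \<exists>z\<in>{A l, B l}. distinct [x, y, z]"
  shows "t \<le> 20"
proof -
  let ?P = "\<lambda>j. colour_pair (A j) (B j)" and ?Q = "{P. P \<subseteq> {..<5::nat} \<and> card P = 2}"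
  have "card ?Q = 10" by (simp add: n_subsets choose_two)
  have "card {j \<in> {..<t}. ?P j = P} \<le> 2" for P
  proof (rule ccontr)
    assume "\<not> ?thesis"
    then have "3 \<le> card {j \<in> {..<t}. ?P j = P}" by simp
    then obtain i j l where ijl: "i \<in> {j \<in> {..<t}. ?P j = P}" "j \<in> {j \<in> {..<t}. ?P j = P}"
      "l \<in> {j \<in> {..<t}. ?P j = P}" "i \<noteq> j" "i \<noteq> l" "j \<noteq> l"
      by (rule card_ge_3_obtains)
    then have "i < t" "j < t" "l < t" by auto
    then obtain x y z where "x \<in> {A i, B i}" "y \<in> {A j, B j}" "z \<in> {A l, B l}"
      and xyz: "distinct [x, y, z]" using T ijl(4-6) by meson
    then have "{x, y, z} \<subseteq> P"
      using ijl(1-3) colour_pair(1)[of "A i" "B i"] colour_pair(1)[of "A j" "B j"]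
        colour_pair(1)[of "A l" "B l"] by auto
    moreover have "card P = 2" using ijl(1) colour_pair(2) by auto
    ultimately have "card {x, y, z} \<le> 2" by (metis card_mono card.infinite zero_neq_numeral)
    then show False using xyz by simp
  qed
  moreover have "?P j \<subseteq> {..<5}" if "j < t" for j
    using col[OF that] colour_pair(3) by simp
  ultimately have "card {..<t} \<le> 2 * card ?Q"
    using colour_pair(2) by (intro card_le_mult_card_if_fibres_le[where f="?P"]) auto
  then show ?thesis using \<open>card ?Q = 10\<close> by simp
qed

text \<open>Relabelling the colours by 0, ..., m - 1 turns a 3-rainbow colouring with at most m
  colours into colour pairs A j, B j below m for which every triple of leaves is connected
  by one of the trees above.\<close>

lemma three_rainbow_coloring_pairs:
  assumes rc: "three_rainbow_coloring (K2_V t) (K2_E t) col" and m: "card (col ` K2_E t) \<le> m"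
  obtains A B where "\<And>j. j < t \<Longrightarrow> A j < m \<and> B j < m"
    and "\<And>i j l. i < t \<Longrightarrow> j < t \<Longrightarrow> l < t \<Longrightarrow> i \<noteq> j \<Longrightarrow> i \<noteq> l \<Longrightarrow> j \<noteq> l \<Longrightarrow>
      triple_rainbow_inner A B i j l \<or> (\<exists>k<t. hub_rainbow3 A B k i j l)"
proof -
  let ?C = "col ` K2_E t"
  obtain h where h: "bij_betw h ?C {0..<card ?C}"
    using ex_bij_betw_finite_nat finite_K2_E finite_imageI by blast
  define A where "A j = h (col (edge0 j))" for j
  define B where "B j = h (col (edge1 j))" for j
  interpret K2_colouring t "h \<circ> col" A B
    by unfold_locales (simp_all add: A_def B_def)
  have "A j < m \<and> B j < m" if "j < t" for j
  proof -
    have "col (edge0 j) \<in> ?C" "col (edge1 j) \<in> ?C" using that by auto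
    then show ?thesis using bij_betw_apply[OF h] m unfolding A_def B_def by fastforce
  qed
  moreover have "triple_rainbow_inner A B i j l \<or> (\<exists>k<t. hub_rainbow3 A B k i j l)"
    if "i < t" "j < t" "l < t" "i \<noteq> j" "i \<noteq> l" "j \<noteq> l" for i j l
  proof -
    have "{Inr i, Inr j, Inr l} \<subseteq> K2_V t" "card {Inr i, Inr j, Inr l} = 3"
      using that by (auto simp: K2_V_def)
    then obtain VT ET where st: "S_tree (K2_V t) (K2_E t) {Inr i, Inr j, Inr l} VT ET"
      and "rainbow col ET"
      using rc unfolding three_rainbow_coloring_def by blast
    moreover have "col ` ET \<subseteq> ?C" using st unfolding S_tree_def by auto
    then have "inj_on h (col ` ET)" using bij_betw_imp_inj_on[OF h] inj_on_subset by blast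
    ultimately have "rainbow (h \<circ> col) ET" unfolding rainbow_def by (simp add: comp_inj_on)
    from rainbow_S_tree_three_leaves[OF st this _ _ _ that(4-6)] show ?thesis by simp
  qed
  ultimately show thesis using that by blast
qed

lemma K2_rainbow_colours_ge_5:
  assumes "three_rainbow_coloring (K2_V t) (K2_E t) col" "9 \<le> t"
  shows "5 \<le> card (col ` K2_E t)"
proof (rule ccontr)
  assume "\<not> ?thesis"
  then have "card (col ` K2_E t) \<le> 4" by simp
  then obtain A B where col: "\<And>j. j < t \<Longrightarrow> A j < 4 \<and> B j < 4"
    and T: "\<And>i j l. i < t \<Longrightarrow> j < t \<Longrightarrow> l < t \<Longrightarrow> i \<noteq> j \<Longrightarrow> i \<noteq> l \<Longrightarrow> j \<noteq> l \<Longrightarrow>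
      triple_rainbow_inner A B i j l \<or> (\<exists>k<t. hub_rainbow3 A B k i j l)"
    using three_rainbow_coloring_pairs[OF assms(1)] by blast
  have no_outer_hub: "\<not> hub_rainbow3 A B k i j l" if "k < t" "i < t" "j < t" "l < t" for k i j l
  proof
    assume "hub_rainbow3 A B k i j l"
    then obtain x y z where "x \<in> {A i, B i}" "y \<in> {A j, B j}" "z \<in> {A l, B l}"
      and d: "distinct [A k, B k, x, y, z]" unfolding hub_rainbow3_def by blast
    then have "set [A k, B k, x, y, z] \<subseteq> {..<4}" using col that by auto
    with d show False using length_distinct_le by fastforce
  qed
  have "t \<le> 8"
    using col T no_outer_hub by (intro four_colours_leaf_bound[of t A B]) blast+
  with assms(2) show False by simp
qed

lemma K2_rainbow_colours_ge_6:
  assumes "three_rainbow_coloring (K2_V t) (K2_E t) col" "21 \<le> t"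
  shows "6 \<le> card (col ` K2_E t)"
proof (rule ccontr)
  assume "\<not> ?thesis"
  then have "card (col ` K2_E t) \<le> 5" by simp
  then obtain A B where "\<And>j. j < t \<Longrightarrow> A j < 5 \<and> B j < 5"
    and "\<And>i j l. i < t \<Longrightarrow> j < t \<Longrightarrow> l < t \<Longrightarrow> i \<noteq> j \<Longrightarrow> i \<noteq> l \<Longrightarrow> j \<noteq> l \<Longrightarrow>
      triple_rainbow_inner A B i j l \<or> (\<exists>k<t. hub_rainbow3 A B k i j l)"
    using three_rainbow_coloring_pairs[OF assms(1)] by blast
  then have "t \<le> 20"
    by (intro five_colours_leaf_bound[of t A B]) (blast intro: distinct_representatives)+
  with assms(2) show False by simp
qed

section \<open>A colouring with five colours\<close>

lemma hub_rainbow2_commute: "hub_rainbow2 A B k i j = hub_rainbow2 A B k j i"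
proof -
  have "distinct [a, b, x, y] = distinct [a, b, y, x]" for a b x y :: nat by auto
  then show ?thesis unfolding hub_rainbow2_def by blast
qed

lemma hub_rainbow3_commute:
  "hub_rainbow3 A B k i j l = hub_rainbow3 A B k j i l"
  "hub_rainbow3 A B k i j l = hub_rainbow3 A B k i l j"
proof -
  have "distinct [a, b, x, y, z] = distinct [a, b, y, x, z]"
    "distinct [a, b, x, y, z] = distinct [a, b, x, z, y]" for a b x y z :: nat by auto
  then show "hub_rainbow3 A B k i j l = hub_rainbow3 A B k j i l"
    "hub_rainbow3 A B k i j l = hub_rainbow3 A B k i l j"
    unfolding hub_rainbow3_def by blast+
qed

lemma triple_rainbow_inner_commute:
  "triple_rainbow_inner A B i j l = triple_rainbow_inner A B j i l"
  "triple_rainbow_inner A B i j l = triple_rainbow_inner A B i l j"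
proof -
  have "distinct [x, y, z] = distinct [y, x, z]" "distinct [x, y, z] = distinct [x, z, y]"
    for x y z :: nat by auto
  then show "triple_rainbow_inner A B i j l = triple_rainbow_inner A B j i l"
    "triple_rainbow_inner A B i j l = triple_rainbow_inner A B i l j"
    unfolding triple_rainbow_inner_def
    using hub_rainbow2_commute[of A B l i j] hub_rainbow2_commute[of A B i j l] by blast+
qed

lemma triple_rainbow_commute:
  "triple_rainbow A B n i j l = triple_rainbow A B n j i l"
  "triple_rainbow A B n i j l = triple_rainbow A B n i l j"
proof -
  show "triple_rainbow A B n i j l = triple_rainbow A B n j i l"
    unfolding triple_rainbow_def triple_rainbow_inner_commute(1)[of A B i j l]
    using hub_rainbow3_commute(1)[of A B _ i j l] by blast
  show "triple_rainbow A B n i j l = triple_rainbow A B n i l j"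
    unfolding triple_rainbow_def triple_rainbow_inner_commute(2)[of A B i j l]
    using hub_rainbow3_commute(2)[of A B _ i j l] by blast
qed

lemma triple_rainbow_if_sorted:
  assumes "\<And>i j l. i < j \<Longrightarrow> j < l \<Longrightarrow> l < n \<Longrightarrow> triple_rainbow A B n i j l"
    and "i < n" "j < n" "l < n" "i \<noteq> j" "i \<noteq> l" "j \<noteq> l"
  shows "triple_rainbow A B n i j l"
proof -
  consider "i < j" "j < l" | "i < l" "l < j" | "j < i" "i < l" | "j < l" "l < i"
    | "l < i" "i < j" | "l < j" "j < i"
    using assms(5-7) by linarith
  then show ?thesis
  proof cases
    case 1
    then show ?thesis using assms by blast
  next
    case 2
    then have "triple_rainbow A B n i l j" using assms by blast
    then show ?thesis using triple_rainbow_commute(2) by blast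
  next
    case 3
    then have "triple_rainbow A B n j i l" using assms by blast
    then show ?thesis using triple_rainbow_commute(1) by blast
  next
    case 4
    then have "triple_rainbow A B n j l i" using assms by blast
    then show ?thesis
      by (simp only: triple_rainbow_commute(1)[of A B n i j l]
          triple_rainbow_commute(2)[of A B n j i l])
  next
    case 5
    then have "triple_rainbow A B n l i j" using assms by blast
    then show ?thesis
      by (simp only: triple_rainbow_commute(2)[of A B n i j l]
          triple_rainbow_commute(1)[of A B n i l j])
  next
    case 6
    then have "triple_rainbow A B n l j i" using assms by blast
    then show ?thesis
      by (simp only: triple_rainbow_commute(1)[of A B n i j l]
          triple_rainbow_commute(2)[of A B n j i l] triple_rainbow_commute(1)[of A B n j l i])
  qed
qed

definition leaf_index :: "(nat + nat) set \<Rightarrow> nat" where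
  "leaf_index e = (SOME j. Inr j \<in> e)"

definition pair_colouring :: "(nat \<Rightarrow> nat) \<Rightarrow> (nat \<Rightarrow> nat) \<Rightarrow> (nat + nat) set \<Rightarrow> nat" where
  "pair_colouring A B e = (if Inl 0 \<in> e then A (leaf_index e) else B (leaf_index e))"

lemma leaf_index [simp]: "leaf_index {Inl a, Inr j} = j"
  unfolding leaf_index_def by (rule some_equality) auto

lemma K2_colouring_pair_colouring: "K2_colouring t (pair_colouring A B) A B"
  by unfold_locales (simp_all add: pair_colouring_def)

lemma pair_colouring_image: "pair_colouring A B ` K2_E t = A ` {..<t} \<union> B ` {..<t}"
  unfolding K2_E_eq_edges image_Un image_image by (simp add: pair_colouring_def)

lemma three_rainbow_coloring_exists: "\<exists>col. three_rainbow_coloring (K2_V t) (K2_E t) col"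
proof -
  have "three_rainbow_coloring (K2_V t) (K2_E t) (pair_colouring (\<lambda>j. 2 * j) (\<lambda>j. 2 * j + 1))"
    by (rule K2_colouring.three_rainbow_coloringI[OF K2_colouring_pair_colouring])
      (auto simp: triple_rainbow_def triple_rainbow_inner_def)
  then show ?thesis by blast
qed

definition colour_pairs_valid :: "(nat \<times> nat) list \<Rightarrow> bool" where
  "colour_pairs_valid L \<longleftrightarrow> (let n = length L; A = (\<lambda>j. fst (L ! j)); B = (\<lambda>j. snd (L ! j)) in
     distinct L \<and> (\<forall>p\<in>set L. fst p \<noteq> snd p) \<and>
     (\<forall>i\<in>set [0..<n]. \<forall>j\<in>set [i+1..<n]. \<forall>l\<in>set [j+1..<n]. triple_rainbow A B n i j l))"

text \<open>The twenty ordered pairs of distinct colours below 5, in an order for which every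
  prefix of length at least 9 is valid and uses all five colours.\<close>

definition colour_pairs_20 :: "(nat \<times> nat) list" where
  "colour_pairs_20 =
     [(0, 3), (1, 0), (1, 2), (4, 1), (3, 2), (4, 0), (1, 3), (0, 1), (2, 4), (3, 4),
      (0, 2), (3, 0), (3, 1), (4, 3), (2, 0), (0, 4), (2, 3), (1, 4), (2, 1), (4, 2)]"

lemma colour_pairs_20_prefixes:
  "\<forall>t\<in>set [9..<21]. colour_pairs_valid (take t colour_pairs_20) \<and>
     set (map fst (take t colour_pairs_20) @ map snd (take t colour_pairs_20)) = {0..<5}"
  unfolding colour_pairs_20_def by code_simp

lemma K2_rainbow_colouring_5:
  assumes "9 \<le> t" "t \<le> 20"
  shows "\<exists>col. three_rainbow_coloring (K2_V t) (K2_E t) col \<and> card (col ` K2_E t) = 5"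
proof -
  define L where "L = take t colour_pairs_20"
  define A B where "A j = fst (L ! j)" and "B j = snd (L ! j)" for j
  have len: "length L = t" using assms by (simp add: L_def colour_pairs_20_def)
  have "t \<in> set [9..<21]" unfolding set_upt using assms by simp
  then have "colour_pairs_valid L" and colours: "set (map fst L @ map snd L) = {0..<5}"
    using colour_pairs_20_prefixes unfolding L_def by blast+
  then have "distinct L" and "\<forall>p\<in>set L. fst p \<noteq> snd p"
    and sorted: "\<forall>i\<in>set [0..<t]. \<forall>j\<in>set [i+1..<t]. \<forall>l\<in>set [j+1..<t]. triple_rainbow A B t i j l"
    unfolding colour_pairs_valid_def Let_def len A_def B_def by blast+
  have "three_rainbow_coloring (K2_V t) (K2_E t) (pair_colouring A B)"
  proof (rule K2_colouring.three_rainbow_coloringI[OF K2_colouring_pair_colouring])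
    show "A j \<noteq> B j" if "j < t" for j
      using \<open>\<forall>p\<in>set L. fst p \<noteq> snd p\<close> that len unfolding A_def B_def by simp
    show "B i \<noteq> B j" if "i < t" "j < t" "i \<noteq> j" "A i = A j" for i j
    proof -
      have "L ! i \<noteq> L ! j" using \<open>distinct L\<close> that(1-3) len by (simp add: nth_eq_iff_index_eq)
      then show ?thesis using that(4) unfolding A_def B_def by (simp add: prod_eq_iff)
    qed
    show "triple_rainbow A B t i j l"
      if "i < t" "j < t" "l < t" "i \<noteq> j" "i \<noteq> l" "j \<noteq> l" for i j l
    proof (rule triple_rainbow_if_sorted[OF _ that])
      fix i j l :: nat assume "i < j" "j < l" "l < t"
      then show "triple_rainbow A B t i j l" by (intro sorted[rule_format]) simp_all
    qed
  qed
  moreover have "set L = (!) L ` {..<t}"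
    using len by (metis map_nth set_map set_upt atLeast0LessThan)
  then have "pair_colouring A B ` K2_E t = {0..<5}"
    using colours unfolding pair_colouring_image A_def B_def by (simp add: image_image)
  ultimately show ?thesis by (metis card_atLeastLessThan diff_zero)
qed

lemma rx3_eqI:
  assumes "three_rainbow_coloring V E c" "card (c ` E) = k"
    and "\<And>c. three_rainbow_coloring V E c \<Longrightarrow> k \<le> card (c ` E)"
  shows "rx3 V E = k"
  unfolding rx3_def using assms by (intro Least_equality) auto

lemma rx3_attained:
  assumes "three_rainbow_coloring V E c"
  obtains c where "three_rainbow_coloring V E c" "card (c ` E) = rx3 V E"
  using LeastI_ex[of "\<lambda>k. \<exists>c. three_rainbow_coloring V E c \<and> card (c ` E) = k"] assms
  unfolding rx3_def by blast

theorem lemma5: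
  shows "(\<forall>t::nat. 9 \<le> t \<and> t \<le> 20 \<longrightarrow> rx3 (K2_V t) (K2_E t) = 5)
       \<and> (\<forall>t::nat. 21 \<le> t \<longrightarrow> rx3 (K2_V t) (K2_E t) \<ge> 6)"
proof (intro conjI allI impI)
  fix t :: nat assume "9 \<le> t \<and> t \<le> 20"
  then show "rx3 (K2_V t) (K2_E t) = 5"
    using K2_rainbow_colouring_5 K2_rainbow_colours_ge_5 by (metis rx3_eqI)
next
  fix t :: nat assume "21 \<le> t"
  obtain c where "three_rainbow_coloring (K2_V t) (K2_E t) c"
    using three_rainbow_coloring_exists by blast
  then obtain c where "three_rainbow_coloring (K2_V t) (K2_E t) c"
    and "card (c ` K2_E t) = rx3 (K2_V t) (K2_E t)"
    by (rule rx3_attained)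
  with \<open>21 \<le> t\<close> show "rx3 (K2_V t) (K2_E t) \<ge> 6"
    using K2_rainbow_colours_ge_6 by metis
qed

end
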